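(* Let $T_M$ be an Endo–Pajitnov manifold as in the context and assume $M$ is diagonalizable; choose the basis $\{b_j\}$ of $W$ to consist of eigenvectors, so that $R$ is diagonal with entries $\beta_1,\dots,\beta_n$. Then there exist smooth complex $1$-forms $\eta,\theta_1,\dots,\theta_n$ of type $(1,0)$ on $\mathbb H\times\mathbb C^n$, invariant under every element of $G_M$ (hence descending to $T_M$), forming at every point a basis of the $(1,0)$-cotangent space, and satisfying $$d\eta=\log\alpha\ \eta\wedge\overline\eta,\qquad d\theta_k=-\log\beta_k\,(\eta+\overline\eta)\wedge\theta_k,\quad 1\le k\le n,$$ where $\log$ denotes the principal branch.
   Context: Endo–Pajitnov setup. Let $n\ge 2$ be an integer and let $M\in \mathrm{SL}(2n+1,\mathbb Z)$ be a matrix whose eigenvalues, listed with multiplicity, are $\alpha,\beta_1,\dots,\beta_n,\overline{\beta_1},\dots,\overline{\beta_n}$, where $\alpha$ is real, $\alpha>0$, $\alpha\neq 1$, and $\operatorname{Im}\beta_j>0$ for all $j$. Let $a=(a^1,\dots,a^{2n+1})^T\in\mathbb R^{2n+1}$ be a nonzero eigenvector of $M$ for $\alpha$. Let $W\subset\mathbb C^{2n+1}$ be the direct sum of the generalized eigenspaces $\{x:\exists N,\ (M-\beta_jI)^Nx=0\}$ over the $\beta_j$ (so $\dim_{\mathbb C}W=n$), and let $b_1,\dots,b_n$ be a $\mathbb C$-basis of $W$, $b_j=(b_j^1,\dots,b_j^{2n+1})^T$. For $1\le i\le 2n+1$ set $u_i=(a^i,b_1^i,\dots,b_n^i)\in\mathbb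 R\times\mathbb C^n$. Let $R=(r_{ij})\in M_n(\mathbb C)$ be the matrix of $M|_W:W\to W$ in the basis $\{b_j\}$, i.e. $Mb_j=\sum_i r_{ij}b_i$. Let $\mathbb H=\{w\in\mathbb C:\operatorname{Im}w>0\}$ and define automorphisms of $\mathbb H\times\mathbb C^n$ by $g_0(w,z)=(\alpha w,R^Tz)$ and $g_i(w,z)=(w,z)+u_i$, $1\le i\le 2n+1$. Let $G_M$ be the group generated by $g_0,\dots,g_{2n+1}$; it acts freely and properly discontinuously, and $T_M:=G_M\backslash(\mathbb H\times\mathbb C^n)$ is a compact complex manifold of complex dimension $n+1$ (the Endo–Pajitnov manifold of $M$). Its biholomorphism class does not depend on the choice of $a$ and of the basis $\{b_j\}$. *)

theory Defs
  imports "HOL-Analysis.Analysis" "HOL-Computational_Algebra.Polynomial"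
begin

definition charpoly :: "'a::comm_ring_1^'m^'m \<Rightarrow> 'a poly" where
  "charpoly A = det (\<chi> i j. (if i = j then [:0, 1:] else 0) - [:A $ i $ j:])"

definition diag_mat :: "('m \<Rightarrow> 'a::zero) \<Rightarrow> 'a^'m^'m" where
  "diag_mat d = (\<chi> i j. if i = j then d i else 0)"

definition diagonalizable :: "complex^'m^'m \<Rightarrow> bool" where
  "diagonalizable A \<longleftrightarrow> (\<exists>(P::complex^'m^'m) d. invertible P \<and> A ** P = P ** diag_mat d)"

definition cmat :: "int^'m^'m \<Rightarrow> complex^'m^'m" where
  "cmat M = (\<chi> i j. of_int (M $ i $ j))"

definition rmat :: "int^'m^'m \<Rightarrow> real^'m^'m" where
  "rmat M = (\<chi> i j. of_int (M $ i $ j))"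

definition gen_eigenspace :: "complex^'m^'m \<Rightarrow> complex \<Rightarrow> (complex^'m) set" where
  "gen_eigenspace A c = {x. \<exists>N. ((\<lambda>y. A *v y - c *s y) ^^ N) x = 0}"

definition Wspace :: "complex^'m^'m \<Rightarrow> ('n \<Rightarrow> complex) \<Rightarrow> (complex^'m) set" where
  "Wspace A \<beta> = vec.span (\<Union>j. gen_eigenspace A (\<beta> j))"

definition HC :: "(complex \<times> (complex^'n)) set" where
  "HC = {p. Im (fst p) > 0}"

text \<open>The generators g_0 (in the eigenbasis, R^T = diag beta) and g_i.\<close>
definition gen0 :: "real \<Rightarrow> ('n \<Rightarrow> complex) \<Rightarrow> complex \<times> (complex^'n) \<Rightarrow> complex \<times> (complex^'n)" where
  "gen0 \<alpha> \<beta> p = (of_real \<alpha> * fst p, \<chi> k. \<beta> k * (snd p $ k))"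

definition uvec :: "real^'m \<Rightarrow> ('n \<Rightarrow> complex^'m) \<Rightarrow> 'm \<Rightarrow> complex \<times> (complex^'n)" where
  "uvec a b i = (of_real (a $ i), \<chi> j. b j $ i)"

definition gens :: "real \<Rightarrow> ('n \<Rightarrow> complex) \<Rightarrow> real^'m \<Rightarrow> ('n \<Rightarrow> complex^'m)
    \<Rightarrow> (complex \<times> (complex^'n) \<Rightarrow> complex \<times> (complex^'n)) set" where
  "gens \<alpha> \<beta> a b = insert (gen0 \<alpha> \<beta>) {(\<lambda>p. p + uvec a b i) | i. True}"

inductive_set gen_group :: "('a \<Rightarrow> 'a) set \<Rightarrow> ('a \<Rightarrow> 'a) set" for S where
  gg_id: "id \<in> gen_group S"
| gg_gen: "g \<in> S \<Longrightarrow> g \<in> gen_group S"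
| gg_inv: "g \<in> S \<Longrightarrow> inv g \<in> gen_group S"
| gg_comp: "g \<in> gen_group S \<Longrightarrow> h \<in> gen_group S \<Longrightarrow> g \<circ> h \<in> gen_group S"

definition G_M :: "real \<Rightarrow> ('n \<Rightarrow> complex) \<Rightarrow> real^'m \<Rightarrow> ('n \<Rightarrow> complex^'m)
    \<Rightarrow> (complex \<times> (complex^'n) \<Rightarrow> complex \<times> (complex^'n)) set" where
  "G_M \<alpha> \<beta> a b = gen_group (gens \<alpha> \<beta> a b)"

fun Ck_on :: "nat \<Rightarrow> 'a::real_normed_vector set \<Rightarrow> ('a \<Rightarrow> 'b::real_normed_vector) \<Rightarrow> bool" where
  "Ck_on 0 U f = continuous_on U f"
| "Ck_on (Suc k) U f = (f differentiable_on U \<and>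
      (\<forall>v. Ck_on k U (\<lambda>p. frechet_derivative f (at p) v)))"

definition smooth_on :: "'a::real_normed_vector set \<Rightarrow> ('a \<Rightarrow> 'b::real_normed_vector) \<Rightarrow> bool" where
  "smooth_on U f \<longleftrightarrow> (\<forall>k. Ck_on k U f)"

text \<open>Complex 1-forms on V are maps p \<mapsto> (real-linear functional V \<rightarrow> C).
  Complex multiplication on V = C \<times> C^n.\<close>
definition cscale :: "complex \<Rightarrow> complex \<times> (complex^'n) \<Rightarrow> complex \<times> (complex^'n)" where
  "cscale c v = (c * fst v, c *s snd v)"

definition smooth_1form :: "(complex \<times> (complex^'n)) set \<Rightarrow>
    (complex \<times> (complex^'n) \<Rightarrow> complex \<times> (complex^'n) \<Rightarrow> complex) \<Rightarrow> bool" where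
  "smooth_1form U \<omega> \<longleftrightarrow> (\<forall>p\<in>U. linear (\<omega> p)) \<and> (\<forall>v. smooth_on U (\<lambda>p. \<omega> p v))"

definition type10 :: "(complex \<times> (complex^'n)) set \<Rightarrow>
    (complex \<times> (complex^'n) \<Rightarrow> complex \<times> (complex^'n) \<Rightarrow> complex) \<Rightarrow> bool" where
  "type10 U \<omega> \<longleftrightarrow> (\<forall>p\<in>U. \<forall>v. \<omega> p (cscale \<i> v) = \<i> * \<omega> p v)"

definition conj_form :: "('a \<Rightarrow> 'b \<Rightarrow> complex) \<Rightarrow> 'a \<Rightarrow> 'b \<Rightarrow> complex" where
  "conj_form \<omega> p v = cnj (\<omega> p v)"

definition add_form :: "('a \<Rightarrow> 'b \<Rightarrow> complex) \<Rightarrow> ('a \<Rightarrow> 'b \<Rightarrow> complex) \<Rightarrow> 'a \<Rightarrow> 'b \<Rightarrow> complex" where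
  "add_form \<omega> \<mu> p v = \<omega> p v + \<mu> p v"

definition wedge :: "('a \<Rightarrow> 'b \<Rightarrow> complex) \<Rightarrow> ('a \<Rightarrow> 'b \<Rightarrow> complex) \<Rightarrow> 'a \<Rightarrow> 'b \<Rightarrow> 'b \<Rightarrow> complex" where
  "wedge \<omega> \<mu> p u v = \<omega> p u * \<mu> p v - \<omega> p v * \<mu> p u"

text \<open>Exterior derivative of a 1-form: d\<omega>(u,v) = u(\<omega>(v)) - v(\<omega>(u)) (constant vector fields).\<close>
definition extd :: "('a::real_normed_vector \<Rightarrow> 'a \<Rightarrow> complex) \<Rightarrow> 'a \<Rightarrow> 'a \<Rightarrow> 'a \<Rightarrow> complex" where
  "extd \<omega> p u v = frechet_derivative (\<lambda>q. \<omega> q v) (at p) u - frechet_derivative (\<lambda>q. \<omega> q u) (at p) v"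

definition pullback :: "('a::real_normed_vector \<Rightarrow> 'a) \<Rightarrow> ('a \<Rightarrow> 'a \<Rightarrow> complex) \<Rightarrow> 'a \<Rightarrow> 'a \<Rightarrow> complex" where
  "pullback g \<omega> p v = \<omega> (g p) (frechet_derivative g (at p) v)"

end

theory Submission imports Defs begin

(* With y = Im w, the forms are eta = -i/(2 log alpha) dw/y and theta_k = y^(-s_k) dz_k with
   s_k = Log beta_k / log alpha.  Every element of G_M is an affine map whose linear part multiplies
   w by alpha^m and z_k by beta_k^m and whose translation is real in the w-coordinate; such a map
   multiplies y by alpha^m = exp (m log alpha), and these factors cancel.  Both forms have the
   shape y^sigma lambda(v) with lambda constant and complex-linear, whose exterior derivative is
   sigma y^(sigma-1) dy /\ lambda; the structure equations follow from
   dy = y log alpha (eta + conj eta) and dw /\ d(conj w) = -2i dw /\ dy. *)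

lemma open_HC: "open (HC :: (complex \<times> (complex^'n)) set)"
  unfolding HC_def by (intro open_Collect_less continuous_intros)

definition height_power :: "complex \<Rightarrow> complex \<times> (complex^'n) \<Rightarrow> complex" where
  "height_power \<sigma> q = exp (\<sigma> * of_real (ln (Im (fst q))))"

definition height_form :: "complex \<Rightarrow> (complex \<times> (complex^'n) \<Rightarrow> complex)
    \<Rightarrow> complex \<times> (complex^'n) \<Rightarrow> complex \<times> (complex^'n) \<Rightarrow> complex" where
  "height_form \<sigma> l p v = height_power \<sigma> p * l v"

lemma height_power_has_derivative:
  assumes "p \<in> HC"
  shows "(height_power \<sigma> has_derivative
           (\<lambda>u. \<sigma> * height_power \<sigma> p * of_real (Im (fst u) / Im (fst p)))) (at p)"
proof -
  have y: "Im (fst p) > 0" using assms by (simp add: HC_def)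
  have "((\<lambda>q. \<sigma> * of_real (ln (Im (fst q)))) has_derivative
         (\<lambda>u. \<sigma> * of_real (Im (fst u) / Im (fst p)))) (at p)"
    using y by (auto intro!: derivative_eq_intros simp: divide_inverse)
  from has_derivative_compose[OF this
      DERIV_exp[THEN has_field_derivative_imp_has_derivative]]
  show ?thesis unfolding height_power_def[abs_def] by (simp add: o_def mult_ac)
qed

lemma height_power_divide_height:
  assumes "p \<in> HC"
  shows "height_power \<sigma> p / of_real (Im (fst p)) = height_power (\<sigma> - 1) p"
proof -
  have y: "Im (fst p) > 0" using assms by (simp add: HC_def)
  have "height_power \<sigma> p = height_power (\<sigma> - 1) p * exp (of_real (ln (Im (fst p))))"
    by (simp add: height_power_def exp_add[symmetric] algebra_simps)
  also have "exp (of_real (ln (Im (fst p)))) = of_real (Im (fst p))"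
    using y by (simp add: exp_of_real)
  finally show ?thesis using y by simp
qed

lemma height_power_of_dilated:
  assumes "p \<in> HC" "r > 0" "Im (fst q) = r * Im (fst p)"
  shows "height_power \<sigma> q = exp (\<sigma> * of_real (ln r)) * height_power \<sigma> p"
  using assms by (simp add: HC_def height_power_def ln_mult exp_add[symmetric] algebra_simps)

lemma Ck_on_height_power:
  assumes "\<forall>p\<in>HC. f p = c * height_power \<sigma> p"
  shows "Ck_on k HC f"
  using assms
proof (induction k arbitrary: f c \<sigma>)
  case 0
  have "isCont (height_power \<sigma>) p" if "p \<in> HC" for p
    using has_derivative_continuous[OF height_power_has_derivative[OF that]] .
  then have "continuous_on HC (\<lambda>p. c * height_power \<sigma> p)"
    by (intro continuous_on_mult_left continuous_at_imp_continuous_on ballI)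
  then show ?case using 0 continuous_on_eq by force
next
  case (Suc k)
  have deriv: "(f has_derivative
      (\<lambda>u. c * (\<sigma> * height_power \<sigma> p * of_real (Im (fst u) / Im (fst p))))) (at p)"
    if "p \<in> HC" for p
    using has_derivative_transform_within_open[OF
        has_derivative_mult_right[OF height_power_has_derivative[OF that]] open_HC that] Suc.prems
    by simp
  have "f differentiable_on HC"
    unfolding differentiable_on_def
    using deriv by (blast intro: differentiable_at_withinI differentiableI)
  moreover have "Ck_on k HC (\<lambda>p. frechet_derivative f (at p) v)" for v
  proof (rule Suc.IH, intro ballI)
    fix p :: "complex \<times> (complex^'a)" assume p: "p \<in> HC"
    show "frechet_derivative f (at p) v
        = (c * \<sigma> * of_real (Im (fst v))) * height_power (\<sigma> - 1) p"
      unfolding frechet_derivative_at[OF deriv[OF p], symmetric]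
        height_power_divide_height[OF p, of \<sigma>, symmetric]
      by (simp add: of_real_divide)
  qed
  ultimately show ?case by simp
qed

lemma smooth_1form_height_form:
  fixes l :: "complex \<times> (complex^'n) \<Rightarrow> complex"
  assumes "linear l"
  shows "smooth_1form HC (height_form \<sigma> l)"
  unfolding smooth_1form_def smooth_on_def
proof (intro conjI ballI allI)
  show "linear (height_form \<sigma> l p)" for p :: "complex \<times> (complex^'n)"
    using assms unfolding linear_iff height_form_def
    by (simp add: linear_add linear_scale scaleR_conv_of_real algebra_simps)
  show "Ck_on k HC (\<lambda>p. height_form \<sigma> l p v)" for v and k
    by (rule Ck_on_height_power[where c = "l v" and \<sigma> = \<sigma>]) (simp add: height_form_def)
qed

lemma type10_height_form:
  assumes "\<forall>v. l (cscale \<i> v) = \<i> * l v"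
  shows "type10 HC (height_form \<sigma> l)"
  using assms by (simp add: type10_def height_form_def)

lemma extd_height_form:
  assumes "p \<in> HC"
  shows "extd (height_form \<sigma> l) p u v
       = \<sigma> * height_power \<sigma> p * (of_real (Im (fst u)) * l v - of_real (Im (fst v)) * l u)
           / of_real (Im (fst p))"
proof -
  have D: "frechet_derivative (\<lambda>q. height_form \<sigma> l q w) (at p) x
      = \<sigma> * height_power \<sigma> p * of_real (Im (fst x) / Im (fst p)) * l w" for w x
  proof -
    have "((\<lambda>q. height_form \<sigma> l q w) has_derivative
        (\<lambda>x. \<sigma> * height_power \<sigma> p * of_real (Im (fst x) / Im (fst p)) * l w)) (at p)"
      unfolding height_form_def by (rule has_derivative_mult_left[OF height_power_has_derivative[OF assms]])
    then show ?thesis by (simp add: frechet_derivative_at[symmetric])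
  qed
  show ?thesis
    unfolding extd_def D by (simp add: of_real_divide diff_divide_distrib algebra_simps)
qed

definition diag_power ::
    "real \<Rightarrow> ('n \<Rightarrow> complex) \<Rightarrow> int \<Rightarrow> complex \<times> (complex^'n) \<Rightarrow> complex \<times> (complex^'n)" where
  "diag_power \<alpha> \<beta> m v = (of_real (\<alpha> powi m) * fst v, \<chi> k. \<beta> k powi m * snd v $ k)"

definition affine_dilations ::
    "real \<Rightarrow> ('n \<Rightarrow> complex) \<Rightarrow> (complex \<times> (complex^'n) \<Rightarrow> complex \<times> (complex^'n)) set" where
  "affine_dilations \<alpha> \<beta> = {g. \<exists>m t z. Im t = 0 \<and> g = (\<lambda>p. diag_power \<alpha> \<beta> m p + (t, z))}"

lemma linear_diag_power: "linear (diag_power \<alpha> \<beta> m)"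
  by (rule linearI) (auto simp: diag_power_def vec_eq_iff algebra_simps scaleR_conv_of_real)

lemma diag_power_0: "diag_power \<alpha> \<beta> 0 = id"
  by (auto simp: diag_power_def vec_eq_iff fun_eq_iff)

lemma diag_power_1: "diag_power \<alpha> \<beta> 1 = gen0 \<alpha> \<beta>"
  by (simp add: diag_power_def gen0_def fun_eq_iff)

lemma diag_power_diag_power:
  assumes "\<alpha> \<noteq> 0" "\<forall>k. \<beta> k \<noteq> 0"
  shows "diag_power \<alpha> \<beta> m (diag_power \<alpha> \<beta> m' p) = diag_power \<alpha> \<beta> (m + m') p"
  using assms by (auto simp: diag_power_def vec_eq_iff power_int_add)

lemma translation_in_affine_dilations:
  "Im (fst c) = 0 \<Longrightarrow> (\<lambda>p. p + c) \<in> affine_dilations \<alpha> \<beta>"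
  unfolding affine_dilations_def
  by (intro CollectI exI[of _ 0] exI[of _ "fst c"] exI[of _ "snd c"]) (simp add: diag_power_0)

lemma diag_power_in_affine_dilations: "diag_power \<alpha> \<beta> m \<in> affine_dilations \<alpha> \<beta>"
  unfolding affine_dilations_def
  by (intro CollectI exI[of _ m] exI[of _ 0]) (simp add: zero_prod_def[symmetric])

lemma affine_dilations_comp:
  assumes "\<alpha> \<noteq> 0" "\<forall>k. \<beta> k \<noteq> 0" "g \<in> affine_dilations \<alpha> \<beta>" "h \<in> affine_dilations \<alpha> \<beta>"
  shows "g \<circ> h \<in> affine_dilations \<alpha> \<beta>"
proof -
  obtain m t z where g: "Im t = 0" "g = (\<lambda>p. diag_power \<alpha> \<beta> m p + (t, z))"
    using assms(3) by (auto simp: affine_dilations_def)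
  obtain m' t' z' where h: "Im t' = 0" "h = (\<lambda>p. diag_power \<alpha> \<beta> m' p + (t', z'))"
    using assms(4) by (auto simp: affine_dilations_def)
  define c where "c = diag_power \<alpha> \<beta> m (t', z') + (t, z)"
  have "g \<circ> h = (\<lambda>p. diag_power \<alpha> \<beta> (m + m') p + (fst c, snd c))"
    unfolding g h c_def
    by (simp add: fun_eq_iff linear_add[OF linear_diag_power] diag_power_diag_power[OF assms(1,2)] add.assoc)
       (simp add: prod_eq_iff)
  moreover have "Im (fst c) = 0"
    using g h by (simp add: c_def diag_power_def del: of_real_power_int)
  ultimately show ?thesis
    unfolding affine_dilations_def by blast
qed

lemma Im_fst_uvec: "Im (fst (uvec a b i)) = 0"
  by (simp add: uvec_def)

lemma G_M_subset_affine_dilations: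
  assumes "\<alpha> \<noteq> 0" "\<forall>k. \<beta> k \<noteq> 0"
  shows "G_M \<alpha> \<beta> a b \<subseteq> affine_dilations \<alpha> \<beta>"
proof
  have gen0_inv: "inv (gen0 \<alpha> \<beta>) = diag_power \<alpha> \<beta> (-1)"
    using diag_power_diag_power[OF assms, of 1 "-1"] diag_power_diag_power[OF assms, of "-1" 1]
    by (intro inv_unique_comp) (simp_all add: fun_eq_iff diag_power_0 diag_power_1)
  have translation_inv: "inv (\<lambda>p. p + c) = (\<lambda>p. p + - c)" for c :: "complex \<times> (complex^'n)"
    by (rule inv_unique_comp) (auto simp: fun_eq_iff)
  fix g assume "g \<in> G_M \<alpha> \<beta> a b"
  then show "g \<in> affine_dilations \<alpha> \<beta>"
    unfolding G_M_def
  proof (induction rule: gen_group.induct)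
    case gg_id
    show ?case by (metis diag_power_0 diag_power_in_affine_dilations)
  next
    case (gg_gen g)
    then consider "g = gen0 \<alpha> \<beta>" | i where "g = (\<lambda>p. p + uvec a b i)"
      by (auto simp: gens_def)
    then show ?case
    proof cases
      case 1
      then show ?thesis by (metis diag_power_1 diag_power_in_affine_dilations)
    qed (simp add: translation_in_affine_dilations Im_fst_uvec)
  next
    case (gg_inv g)
    then consider "g = gen0 \<alpha> \<beta>" | i where "g = (\<lambda>p. p + uvec a b i)"
      by (auto simp: gens_def)
    then show ?case
    proof cases
      case 1
      then show ?thesis by (simp add: gen0_inv diag_power_in_affine_dilations)
    next
      case (2 i)
      have "inv g = (\<lambda>p. p + - uvec a b i)" unfolding 2 by (rule translation_inv)
      moreover have "Im (fst (- uvec a b i)) = 0" by (simp add: Im_fst_uvec)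
      ultimately show ?thesis by (simp only: translation_in_affine_dilations)
    qed
  next
    case (gg_comp g h)
    then show ?case using affine_dilations_comp[OF assms] by blast
  qed
qed

lemma powi_eq_exp_ln: "(\<alpha>::real) > 0 \<Longrightarrow> \<alpha> powi m = exp (of_int m * ln \<alpha>)"
  using exp_power_int[of "ln \<alpha>" m] by simp

lemma powi_eq_exp_Ln: "z \<noteq> 0 \<Longrightarrow> z powi m = exp (of_int m * Ln z)"
  using exp_power_int[of "Ln z" m] by simp

lemma pullback_height_form_affine_dilation:
  fixes l :: "complex \<times> (complex^'n) \<Rightarrow> complex"
  assumes "\<alpha> > 0" "g \<in> affine_dilations \<alpha> \<beta>" "p \<in> HC"
  obtains m where "\<And>v. pullback g (height_form \<sigma> l) p v
      = exp (\<sigma> * of_real (of_int m * ln \<alpha>)) * height_power \<sigma> p * l (diag_power \<alpha> \<beta> m v)"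
proof -
  obtain m t z where t: "Im t = 0" and g: "g = (\<lambda>p. diag_power \<alpha> \<beta> m p + (t, z))"
    using assms(2) by (auto simp: affine_dilations_def)
  have "bounded_linear (diag_power \<alpha> \<beta> m :: complex \<times> (complex^'n) \<Rightarrow> _)"
    using linear_diag_power linear_conv_bounded_linear by blast
  then have "(g has_derivative diag_power \<alpha> \<beta> m) (at q)" for q
    unfolding g by (intro has_derivative_add_const bounded_linear.has_derivative[OF _ has_derivative_ident]) simp
  then have Dg: "frechet_derivative g (at p) = diag_power \<alpha> \<beta> m"
    by (metis frechet_derivative_at)
  have "Im (fst (g p)) = \<alpha> powi m * Im (fst p)"
    using t by (simp add: g diag_power_def del: of_real_power_int)
  from height_power_of_dilated[OF assms(3) _ this]
  have "height_power \<sigma> (g p) = exp (\<sigma> * of_real (of_int m * ln \<alpha>)) * height_power \<sigma> p"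
    unfolding powi_eq_exp_ln[OF assms(1)] ln_exp by simp
  then show ?thesis
    by (intro that[of m]) (simp add: pullback_def height_form_def Dg)
qed

definition eta_form :: "real \<Rightarrow> complex \<times> (complex^'n) \<Rightarrow> complex \<times> (complex^'n) \<Rightarrow> complex" where
  "eta_form \<alpha> = height_form (-1) (\<lambda>v. - \<i> / (2 * of_real (ln \<alpha>)) * fst v)"

definition theta_form ::
    "real \<Rightarrow> ('n \<Rightarrow> complex) \<Rightarrow> 'n \<Rightarrow> complex \<times> (complex^'n) \<Rightarrow> complex \<times> (complex^'n) \<Rightarrow> complex" where
  "theta_form \<alpha> \<beta> k = height_form (- Ln (\<beta> k) / of_real (ln \<alpha>)) (\<lambda>v. snd v $ k)"

lemma eta_form_invariant:
  assumes "\<alpha> > 0" "g \<in> affine_dilations \<alpha> \<beta>" "p \<in> HC"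
  shows "pullback g (eta_form \<alpha>) p v = eta_form \<alpha> p v"
proof -
  define C where "C = - \<i> / (2 * of_real (ln \<alpha>))"
  obtain m where m: "\<And>v. pullback g (eta_form \<alpha>) p v
      = exp (- of_real (of_int m * ln \<alpha>)) * height_power (-1) p * (C * fst (diag_power \<alpha> \<beta> m v))"
    using pullback_height_form_affine_dilation[OF assms, where \<sigma> = "-1" and l = "\<lambda>v. C * fst v"]
    unfolding eta_form_def C_def by (metis mult_minus1)
  have "exp (- of_real (of_int m * ln \<alpha>)) * complex_of_real (\<alpha> powi m) = 1"
    unfolding powi_eq_exp_ln[OF assms(1)] exp_of_real[symmetric] by (simp add: exp_minus_inverse mult.commute)
  then show ?thesis
    unfolding m by (simp add: eta_form_def height_form_def diag_power_def C_def del: of_real_power_int)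
qed

lemma theta_form_invariant:
  assumes "\<alpha> > 0" "\<alpha> \<noteq> 1" "\<beta> k \<noteq> 0" "g \<in> affine_dilations \<alpha> \<beta>" "p \<in> HC"
  shows "pullback g (theta_form \<alpha> \<beta> k) p v = theta_form \<alpha> \<beta> k p v"
proof -
  define s where "s = - Ln (\<beta> k) / of_real (ln \<alpha>)"
  obtain m where m: "\<And>v. pullback g (theta_form \<alpha> \<beta> k) p v
      = exp (s * of_real (of_int m * ln \<alpha>)) * height_power s p * (snd (diag_power \<alpha> \<beta> m v) $ k)"
    using pullback_height_form_affine_dilation[OF assms(1,4,5), where \<sigma> = s and l = "\<lambda>v. snd v $ k"]
    unfolding theta_form_def s_def by blast
  have "s * of_real (of_int m * ln \<alpha>) = - (of_int m * Ln (\<beta> k))"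
    using assms(1,2) by (simp add: s_def)
  then have "exp (s * of_real (of_int m * ln \<alpha>)) * \<beta> k powi m = 1"
    unfolding powi_eq_exp_Ln[OF assms(3)] by (simp add: exp_minus_inverse mult.commute)
  then show ?thesis
    unfolding m by (simp add: theta_form_def height_form_def diag_power_def s_def mult.assoc)
qed

lemma height_power_minus_one:
  "p \<in> HC \<Longrightarrow> height_power (-1) p = of_real (inverse (Im (fst p)))"
  using height_power_divide_height[of p 0] by (simp add: height_power_def divide_inverse)

lemma extd_eta_form:
  assumes "\<alpha> > 0" "\<alpha> \<noteq> 1" "p \<in> HC"
  shows "extd (eta_form \<alpha>) p u v = of_real (ln \<alpha>) * wedge (eta_form \<alpha>) (conj_form (eta_form \<alpha>)) p u v"
proof -
  have "ln \<alpha> \<noteq> 0" "Im (fst p) > 0" using assms by (auto simp: HC_def)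
  then show ?thesis
    unfolding eta_form_def extd_height_form[OF assms(3)]
    by (simp add: height_form_def wedge_def conj_form_def height_power_minus_one[OF assms(3)]
        complex_eq_iff field_simps power2_eq_square)
qed

lemma eta_form_plus_conj:
  assumes "\<alpha> > 0" "\<alpha> \<noteq> 1" "p \<in> HC"
  shows "add_form (eta_form \<alpha>) (conj_form (eta_form \<alpha>)) p w = of_real (Im (fst w) / (Im (fst p) * ln \<alpha>))"
proof -
  have "ln \<alpha> \<noteq> 0" "Im (fst p) > 0" using assms by (auto simp: HC_def)
  then show ?thesis
    by (simp add: eta_form_def height_form_def add_form_def conj_form_def
        height_power_minus_one[OF assms(3)] complex_eq_iff field_simps)
qed

lemma extd_theta_form:
  assumes "\<alpha> > 0" "\<alpha> \<noteq> 1" "p \<in> HC"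
  shows "extd (theta_form \<alpha> \<beta> k) p u v
     = - Ln (\<beta> k) * wedge (add_form (eta_form \<alpha>) (conj_form (eta_form \<alpha>))) (theta_form \<alpha> \<beta> k) p u v"
proof -
  have "ln \<alpha> \<noteq> 0" "Im (fst p) > 0" using assms by (auto simp: HC_def)
  then show ?thesis
    unfolding theta_form_def extd_height_form[OF assms(3)] wedge_def eta_form_plus_conj[OF assms]
    by (simp add: height_form_def field_simps)
qed

lemma cscale_eq_scaleR: "cscale z v = Re z *\<^sub>R v + Im z *\<^sub>R cscale \<i> v"
proof -
  have "\<And>w::complex. z * w = Re z *\<^sub>R w + Im z *\<^sub>R (\<i> * w)"
    by (simp add: complex_eq_iff algebra_simps)
  then show ?thesis by (simp add: cscale_def prod_eq_iff vec_eq_iff)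
qed

lemma complex_linear_cscale:
  assumes "linear \<phi>" "\<forall>v. \<phi> (cscale \<i> v) = \<i> * \<phi> v"
  shows "\<phi> (cscale z v) = z * \<phi> v"
proof -
  have "\<phi> (cscale z v) = Re z *\<^sub>R \<phi> v + Im z *\<^sub>R (\<i> * \<phi> v)"
    unfolding cscale_eq_scaleR[of z v]
    by (simp add: linear_add[OF assms(1)] linear_scale[OF assms(1)] assms(2))
  also have "\<dots> = z * \<phi> v" by (simp add: complex_eq_iff algebra_simps)
  finally show ?thesis .
qed

lemma cscale_basis_expansion:
  fixes v :: "complex \<times> (complex^'n::finite)"
  shows "v = cscale (fst v) (1, 0) + (\<Sum>k\<in>UNIV. cscale (snd v $ k) (0, axis k 1))"
  using basis_expansion[of "snd v"] by (simp add: prod_eq_iff cscale_def fst_sum snd_sum)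

lemma complex_linear_functional_coordinates:
  fixes \<phi> :: "complex \<times> (complex^'n::finite) \<Rightarrow> complex"
  assumes "c0 \<noteq> 0" "\<forall>k. e k \<noteq> 0" "linear \<phi>" "\<forall>v. \<phi> (cscale \<i> v) = \<i> * \<phi> v"
  shows "\<exists>!c::complex \<times> ('n \<Rightarrow> complex).
           \<forall>v. \<phi> v = fst c * (c0 * fst v) + (\<Sum>k\<in>UNIV. snd c k * (e k * snd v $ k))"
proof (rule ex1I[of _ "(\<phi> (1, 0) / c0, \<lambda>k. \<phi> (0, axis k 1) / e k)"], intro allI)
  fix v :: "complex \<times> (complex^'n)"
  have "\<phi> v = fst v * \<phi> (1, 0) + (\<Sum>k\<in>UNIV. snd v $ k * \<phi> (0, axis k 1))"
    by (subst cscale_basis_expansion)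
      (simp add: linear_add[OF assms(3)] linear_sum[OF assms(3)] complex_linear_cscale[OF assms(3,4)])
  then show "\<phi> v = fst (\<phi> (1, 0) / c0, \<lambda>k. \<phi> (0, axis k 1) / e k) * (c0 * fst v)
      + (\<Sum>k\<in>UNIV. snd (\<phi> (1, 0) / c0, \<lambda>k. \<phi> (0, axis k 1) / e k) k * (e k * snd v $ k))"
    using assms(1,2) by (simp add: mult.commute)
next
  fix c :: "complex \<times> ('n \<Rightarrow> complex)"
  assume c: "\<forall>v. \<phi> v = fst c * (c0 * fst v) + (\<Sum>k\<in>UNIV. snd c k * (e k * snd v $ k))"
  have "fst c = \<phi> (1, 0) / c0"
    using c[rule_format, of "(1, 0)"] assms(1) by simp
  moreover have "snd c j = \<phi> (0, axis j 1) / e j" for j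
    using c[rule_format, of "(0, axis j 1)"] assms(2)
    by (simp add: axis_def if_distrib cong: if_cong)
  ultimately show "c = (\<phi> (1, 0) / c0, \<lambda>k. \<phi> (0, axis k 1) / e k)"
    by (simp add: prod_eq_iff fun_eq_iff)
qed

lemma eta_theta_coordinates:
  fixes \<phi> :: "complex \<times> (complex^'n::finite) \<Rightarrow> complex"
  assumes "\<alpha> > 0" "\<alpha> \<noteq> 1" "linear \<phi>" "\<forall>v. \<phi> (cscale \<i> v) = \<i> * \<phi> v"
  shows "\<exists>!c::complex \<times> ('n \<Rightarrow> complex).
           \<forall>v. \<phi> v = fst c * eta_form \<alpha> p v + (\<Sum>k\<in>UNIV. snd c k * theta_form \<alpha> \<beta> k p v)"
proof -
  have "height_power (-1) p * (- \<i> / (2 * of_real (ln \<alpha>))) \<noteq> 0"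
    using assms(1,2) by (simp add: height_power_def)
  from complex_linear_functional_coordinates[OF this _ assms(3,4),
      of "\<lambda>k. height_power (- Ln (\<beta> k) / of_real (ln \<alpha>)) p"]
  show ?thesis
    by (simp add: eta_form_def theta_form_def height_form_def height_power_def mult.assoc)
qed

lemma smooth_1form_eta_form: "smooth_1form HC (eta_form \<alpha>)"
  unfolding eta_form_def
  by (intro smooth_1form_height_form linearI) (simp_all add: algebra_simps scaleR_conv_of_real add_divide_distrib)

lemma type10_eta_form: "type10 HC (eta_form \<alpha>)"
  unfolding eta_form_def by (rule type10_height_form) (simp add: cscale_def)

lemma smooth_1form_theta_form: "smooth_1form HC (theta_form \<alpha> \<beta> k)"
  unfolding theta_form_def
  by (intro smooth_1form_height_form linearI) simp_all

lemma type10_theta_form: "type10 HC (theta_form \<alpha> \<beta> k)"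
  unfolding theta_form_def by (rule type10_height_form) (simp add: cscale_def)

theorem corollary5p2:
  fixes M :: "int^'m^'m" and \<alpha> :: real and \<beta> :: "'n::finite \<Rightarrow> complex"
    and a :: "real^'m" and b :: "'n \<Rightarrow> complex^'m"
  assumes "CARD('n) \<ge> 2" and "CARD('m) = 2 * CARD('n) + 1"
    and "det M = 1"
    and "\<alpha> > 0" and "\<alpha> \<noteq> 1" and "\<forall>j. Im (\<beta> j) > 0"
    and "charpoly (cmat M) = [:- complex_of_real \<alpha>, 1:] *
           (\<Prod>j\<in>UNIV. [:- \<beta> j, 1:] * [:- cnj (\<beta> j), 1:])"
    and "diagonalizable (cmat M)"
    and "a \<noteq> 0" and "rmat M *v a = \<alpha> *\<^sub>R a"
    and "inj b" and "vec.independent (range b)"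
    and "vec.span (range b) = Wspace (cmat M) \<beta>"
    and "\<forall>j. cmat M *v b j = \<beta> j *s b j"
  shows "\<exists>\<eta> \<theta>.
     smooth_1form HC \<eta> \<and> type10 HC \<eta> \<and>
     (\<forall>k. smooth_1form HC (\<theta> k) \<and> type10 HC (\<theta> k)) \<and>
     (\<forall>g\<in>G_M \<alpha> \<beta> a b. \<forall>p\<in>HC. \<forall>v.
        pullback g \<eta> p v = \<eta> p v \<and> (\<forall>k. pullback g (\<theta> k) p v = \<theta> k p v)) \<and>
     (\<forall>p\<in>HC. \<forall>\<phi>. linear \<phi> \<and> (\<forall>v. \<phi> (cscale \<i> v) = \<i> * \<phi> v) \<longrightarrow>
        (\<exists>!c::complex \<times> ('n \<Rightarrow> complex).
           \<forall>v. \<phi> v = fst c * \<eta> p v + (\<Sum>k\<in>UNIV. snd c k * \<theta> k p v))) \<and>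
     (\<forall>p\<in>HC. \<forall>u v.
        extd \<eta> p u v = complex_of_real (ln \<alpha>) * wedge \<eta> (conj_form \<eta>) p u v) \<and>
     (\<forall>k. \<forall>p\<in>HC. \<forall>u v.
        extd (\<theta> k) p u v = - Ln (\<beta> k) * wedge (add_form \<eta> (conj_form \<eta>)) (\<theta> k) p u v)"
proof -
  have nonzero: "\<alpha> \<noteq> 0" "\<forall>k. \<beta> k \<noteq> 0"
    using assms(4,6) by (metis less_irrefl zero_complex.sel(2))+
  have invariant: "pullback g (eta_form \<alpha>) p v = eta_form \<alpha> p v"
      "pullback g (theta_form \<alpha> \<beta> k) p v = theta_form \<alpha> \<beta> k p v"
    if "g \<in> G_M \<alpha> \<beta> a b" "p \<in> HC" for g p v k
  proof -
    have "g \<in> affine_dilations \<alpha> \<beta>" using G_M_subset_affine_dilations[OF nonzero] that(1) by blast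
    then show "pullback g (eta_form \<alpha>) p v = eta_form \<alpha> p v"
      "pullback g (theta_form \<alpha> \<beta> k) p v = theta_form \<alpha> \<beta> k p v"
      using eta_form_invariant theta_form_invariant that(2) nonzero(2) assms(4,5) by blast+
  qed
  show ?thesis
    using assms(4,5)
    by (intro exI[of _ "eta_form \<alpha>"] exI[of _ "theta_form \<alpha> \<beta>"])
      (simp add: smooth_1form_eta_form type10_eta_form smooth_1form_theta_form type10_theta_form
        invariant eta_theta_coordinates extd_eta_form extd_theta_form del: split_paired_All)
qed

end
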